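(* Let $\mathfrak S=(S,\xrightarrow{F},\le)$ be an $\infty$-effective complete WSTS and $s_0\in S$. If the procedure $\mathbf{Clover}_{\mathfrak S}$ terminates on input $s_0$, then it returns $Clover_{\mathfrak S}(s_0)$.
   Context: A complete WSTS is a functional transition system $(S,\xrightarrow{F},\le)$ ($F$ finite set of partial maps, $s\to f(s)$ for $s\in\operatorname{dom}f$) where $(S,\le)$ is a partial order which is well (well-founded, no infinite antichain), a dcpo (every directed subset $D$ has a lub $\bigvee D$), and continuous (for every $x$, $\{y\mid y\ll x\}$ is directed with lub $x$, where $y\ll x$ iff every directed $D$ with $x\le\bigvee D$ contains an element above $y$), and each $f\in F$ is partial continuous: $\operatorname{dom}f$ is Scott-open (upward-closed and any directed $D$ with $\bigvee D$ in it meets it) and $f(\bigvee D)=\bigvee f(D)$ for directed $D\subseteq\operatorname{dom}f$. $Post(A)$: one-step successors; $Post^*$: reflexive-transitive closure; $Cover_{\mathfrak S}(s)=\downarrow Post^*(\downarrow s)$; $\operatorname{Lub}(E)=\{\bigvee D\mid D\subseteq E\text{ directed}\}$; $Clover_{\mathfrak S}(s)=\operatorname{Max}\operatorname{Lub}(Cover_{\mathfrak S}(s))$ (maximal elements). $F^*$: finite compositions of maps in $F$. Lub-acceleration: $\operatorname{dom}g^\infty=\operatorname{dom}g$; $g^\infty(x)=\bigvee_n g^n(x)$ if $x<g(x)$, else $g(x)$. $\infty$-effective: states finitely coded, $\le$ decidable, each $f\in F$ computable with decidable domain, and $g^\infty$ computable for each $g\in F^*$. Procedure $\mathbf{Clover}_{\mathfrak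 S}(s_0)$: 1. $A\leftarrow\{s_0\}$; 2. while $Post(A)\not\le^\flat A$ do (a) choose fairly $(g,a)\in F^*\times A$ with $a\in\operatorname{dom}g$; (b) $A\leftarrow A\cup\{g^\infty(a)\}$; 3. return $\operatorname{Max}A$. Here $B\le^\flat C$ iff $\downarrow B\subseteq\downarrow C$. Fairness: on every infinite execution, every pair $(g,a)\in F^*\times A_m$ (with $A_m$ the value of $A$ after $m$ iterations, $a\in\operatorname{dom}g$) is picked at some later stage. *)

theory Defs
  imports Main
begin

definition directed :: "('s::order) set \<Rightarrow> bool" where
  "directed D \<longleftrightarrow> D \<noteq> {} \<and> (\<forall>x\<in>D. \<forall>y\<in>D. \<exists>z\<in>D. x \<le> z \<and> y \<le> z)"

definition is_lub :: "('s::order) set \<Rightarrow> 's \<Rightarrow> bool" where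
  "is_lub D x \<longleftrightarrow> (\<forall>d\<in>D. d \<le> x) \<and> (\<forall>u. (\<forall>d\<in>D. d \<le> u) \<longrightarrow> x \<le> u)"

definition lub :: "('s::order) set \<Rightarrow> 's" where
  "lub D = (THE x. is_lub D x)"

definition well_po :: "'s::order itself \<Rightarrow> bool" where
  "well_po _ \<longleftrightarrow> wfP ((<) :: 's \<Rightarrow> 's \<Rightarrow> bool) \<and>
     (\<forall>A::'s set. (\<forall>x\<in>A. \<forall>y\<in>A. x \<noteq> y \<longrightarrow> \<not> x \<le> y \<and> \<not> y \<le> x) \<longrightarrow> finite A)"

definition dcpo :: "'s::order itself \<Rightarrow> bool" where
  "dcpo _ \<longleftrightarrow> (\<forall>D::'s set. directed D \<longrightarrow> (\<exists>x. is_lub D x))"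

definition way_below :: "('s::order) \<Rightarrow> 's \<Rightarrow> bool" where
  "way_below y x \<longleftrightarrow> (\<forall>D. directed D \<longrightarrow> x \<le> lub D \<longrightarrow> (\<exists>d\<in>D. y \<le> d))"

definition continuous_po :: "'s::order itself \<Rightarrow> bool" where
  "continuous_po _ \<longleftrightarrow> (\<forall>x::'s. directed {y. way_below y x} \<and> is_lub {y. way_below y x} x)"

definition scott_open :: "('s::order) set \<Rightarrow> bool" where
  "scott_open U \<longleftrightarrow> (\<forall>x y. x \<in> U \<longrightarrow> x \<le> y \<longrightarrow> y \<in> U) \<and>
     (\<forall>D. directed D \<longrightarrow> lub D \<in> U \<longrightarrow> D \<inter> U \<noteq> {})"

definition partial_continuous :: "(('s::order) \<Rightarrow> 's option) \<Rightarrow> bool" where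
  "partial_continuous f \<longleftrightarrow> scott_open (dom f) \<and>
     (\<forall>D. directed D \<longrightarrow> D \<subseteq> dom f \<longrightarrow> is_lub (the ` f ` D) (the (f (lub D))))"

definition complete_wsts :: "(('s::order) \<Rightarrow> 's option) set \<Rightarrow> bool" where
  "complete_wsts F \<longleftrightarrow> finite F \<and> well_po TYPE('s) \<and> dcpo TYPE('s) \<and> continuous_po TYPE('s) \<and>
     (\<forall>f\<in>F. partial_continuous f)"

definition Post :: "('s \<Rightarrow> 's option) set \<Rightarrow> 's set \<Rightarrow> 's set" where
  "Post F A = {y. \<exists>f\<in>F. \<exists>a\<in>A. f a = Some y}"

inductive_set Post_star :: "('s \<Rightarrow> 's option) set \<Rightarrow> 's set \<Rightarrow> 's set"
  for F :: "('s \<Rightarrow> 's option) set" and A :: "'s set" where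
  base: "a \<in> A \<Longrightarrow> a \<in> Post_star F A"
| step: "x \<in> Post_star F A \<Longrightarrow> f \<in> F \<Longrightarrow> f x = Some y \<Longrightarrow> y \<in> Post_star F A"

definition down :: "('s::order) set \<Rightarrow> 's set" where
  "down A = {x. \<exists>a\<in>A. x \<le> a}"

definition le_flat :: "('s::order) set \<Rightarrow> 's set \<Rightarrow> bool" where
  "le_flat B C \<longleftrightarrow> down B \<subseteq> down C"

definition Cover :: "(('s::order) \<Rightarrow> 's option) set \<Rightarrow> 's \<Rightarrow> 's set" where
  "Cover F s = down (Post_star F (down {s}))"

definition Lub :: "('s::order) set \<Rightarrow> 's set" where
  "Lub E = {lub D | D. D \<subseteq> E \<and> directed D}"

definition maximal :: "('s::order) set \<Rightarrow> 's set" where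
  "maximal A = {x\<in>A. \<forall>y\<in>A. x \<le> y \<longrightarrow> y = x}"

definition Clover :: "(('s::order) \<Rightarrow> 's option) set \<Rightarrow> 's \<Rightarrow> 's set" where
  "Clover F s = maximal (Lub (Cover F s))"

definition Fstar :: "('s \<Rightarrow> 's option) set \<Rightarrow> ('s \<Rightarrow> 's option) set" where
  "Fstar F = {foldr (\<lambda>f g. f \<circ>\<^sub>m g) fs Some | fs. set fs \<subseteq> F}"

primrec piter :: "('s \<Rightarrow> 's option) \<Rightarrow> nat \<Rightarrow> 's \<Rightarrow> 's option" where
  "piter g 0 x = Some x"
| "piter g (Suc n) x = Option.bind (piter g n x) g"

definition accel :: "(('s::order) \<Rightarrow> 's option) \<Rightarrow> 's \<Rightarrow> 's option" where
  "accel g x = (case g x of None \<Rightarrow> None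
     | Some y \<Rightarrow> if x < y then Some (lub {z. \<exists>n. piter g n x = Some z}) else Some y)"

text \<open>A terminating execution of procedure Clover(s0) of n loop iterations:
  A i is the value of the variable A after i iterations; the loop guard holds
  before each of the n iterations and fails after the last one; the returned
  value is maximal (A n).\<close>

definition terminating_run ::
  "(('s::order) \<Rightarrow> 's option) set \<Rightarrow> 's \<Rightarrow> (nat \<Rightarrow> 's set) \<Rightarrow> nat \<Rightarrow> bool" where
  "terminating_run F s0 A n \<longleftrightarrow> A 0 = {s0} \<and>
     (\<forall>i<n. \<not> le_flat (Post F (A i)) (A i) \<and>
        (\<exists>g\<in>Fstar F. \<exists>a\<in>A i. a \<in> dom g \<and> A (Suc i) = A i \<union> {the (accel g a)})) \<and>
     le_flat (Post F (A n)) (A n)"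

end

theory Submission
  imports Defs
begin

text \<open>Every state the procedure adds lies in \<open>Lub (Cover F s0)\<close>: this set is closed under the
  maps of \<open>F\<close> by partial continuity, hence under \<open>F\<^sup>*\<close>, and, the state space being a
  continuous dcpo, under lubs of directed subsets, hence under lub-acceleration. Conversely, when
  the loop stops, \<open>\<down>A\<close> contains \<open>s0\<close> and is closed under \<open>Post\<close> up to \<open>\<le>\<close>, so by
  monotonicity it contains \<open>Cover F s0\<close>; as \<open>A\<close> is finite, a directed subset of \<open>\<down>A\<close> is
  bounded by a single element of \<open>A\<close>, so \<open>\<down>A\<close> contains \<open>Lub (Cover F s0)\<close> as well.
  Sandwiched between \<open>A\<close> and \<open>\<down>A\<close>, the set \<open>Lub (Cover F s0)\<close> has the same maximal
  elements as \<open>A\<close>.\<close>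

subsection \<open>Directed sets and least upper bounds\<close>

lemma lub_eqI: "is_lub D (x::'s::order) \<Longrightarrow> lub D = x"
  unfolding lub_def by (rule the_equality) (auto simp: is_lub_def intro: antisym)

lemma is_lub_lub: "dcpo TYPE('s::order) \<Longrightarrow> directed (D::'s set) \<Longrightarrow> is_lub D (lub D)"
  unfolding dcpo_def using lub_eqI by metis

lemma lub_upper: "dcpo TYPE('s::order) \<Longrightarrow> directed (D::'s set) \<Longrightarrow> d \<in> D \<Longrightarrow> d \<le> lub D"
  using is_lub_lub unfolding is_lub_def by blast

lemma lub_least:
  "dcpo TYPE('s::order) \<Longrightarrow> directed (D::'s set) \<Longrightarrow> (\<And>d. d \<in> D \<Longrightarrow> d \<le> u) \<Longrightarrow> lub D \<le> u"
  using is_lub_lub unfolding is_lub_def by blast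

lemma directedD: "directed D \<Longrightarrow> x \<in> D \<Longrightarrow> y \<in> D \<Longrightarrow> \<exists>z\<in>D. x \<le> z \<and> y \<le> z"
  unfolding directed_def by blast

lemma directed_nonempty: "directed D \<Longrightarrow> D \<noteq> {}"
  unfolding directed_def by blast

lemma directed_image_mono_on:
  assumes D: "directed D" and h: "mono_on D h"
  shows "directed (h ` D)"
  unfolding directed_def
proof (intro conjI ballI)
  show "h ` D \<noteq> {}" using directed_nonempty[OF D] by blast
next
  fix u v assume "u \<in> h ` D" "v \<in> h ` D"
  then obtain x y where "x \<in> D" "y \<in> D" "u = h x" "v = h y" by blast
  moreover from this obtain z where "z \<in> D" "x \<le> z" "y \<le> z" using directedD[OF D] by blast
  ultimately show "\<exists>w\<in>h ` D. u \<le> w \<and> v \<le> w" using mono_onD[OF h] by blast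
qed

lemma directed_range_mono:
  assumes "mono (c :: nat \<Rightarrow> 's::order)"
  shows "directed (range c)"
proof -
  have "directed (UNIV :: nat set)" by (simp add: directed_def) (meson max.cobounded1 max.cobounded2)
  then show ?thesis using directed_image_mono_on assms by (metis mono_on_subset subset_UNIV)
qed

lemma directed_finite_upper_bound:
  assumes "directed D" "finite B" "B \<subseteq> D"
  shows "\<exists>z\<in>D. \<forall>b\<in>B. b \<le> (z::'s::order)"
  using assms(2,3)
proof (induction B rule: finite_induct)
  case empty
  then show ?case using directed_nonempty[OF assms(1)] by blast
next
  case (insert x B)
  then obtain z where "z \<in> D" "\<forall>b\<in>B. b \<le> z" by blast
  moreover obtain w where "w \<in> D" "x \<le> w" "z \<le> w"
    using directedD[OF assms(1)] insert.prems calculation(1) by blast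
  ultimately show ?case by (metis insert_iff order_trans)
qed

lemma directed_subset_down_finite:
  assumes "finite A" "directed D" "D \<subseteq> down A"
  shows "\<exists>a\<in>A. \<forall>d\<in>D. d \<le> (a::'s::order)"
proof (rule ccontr)
  assume "\<not> ?thesis"
  then obtain h where h: "\<forall>a\<in>A. h a \<in> D \<and> \<not> h a \<le> a" by metis
  obtain z where z: "z \<in> D" "\<forall>b\<in>h ` A. b \<le> z"
    using directed_finite_upper_bound[OF assms(2), of "h ` A"] assms(1) h by blast
  then obtain a where "a \<in> A" "z \<le> a" using assms(3) unfolding down_def by blast
  then show False using h z by (meson imageI order_trans)
qed

lemma Lub_subset_down_finite:
  assumes "dcpo TYPE('s::order)" "finite A" "E \<subseteq> down (A::'s set)"
  shows "Lub E \<subseteq> down A"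
proof
  fix x assume "x \<in> Lub E"
  then obtain D where D: "D \<subseteq> E" "directed D" "x = lub D" unfolding Lub_def by blast
  then obtain a where "a \<in> A" "\<forall>d\<in>D. d \<le> a"
    using directed_subset_down_finite[OF assms(2) D(2)] assms(3) by blast
  moreover from this have "x \<le> a" using lub_least[OF assms(1) D(2)] D(3) by blast
  ultimately show "x \<in> down A" unfolding down_def by blast
qed

lemma subset_Lub: "E \<subseteq> Lub (E::'s::order set)"
proof
  fix x assume "x \<in> E"
  moreover have "lub {x} = x" by (rule lub_eqI) (simp add: is_lub_def)
  moreover have "directed {x}" unfolding directed_def by auto
  ultimately show "x \<in> Lub E" unfolding Lub_def by force
qed

lemma down_mono: "A \<subseteq> B \<Longrightarrow> down A \<subseteq> down (B::'s::order set)"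
  unfolding down_def by blast

lemma down_down: "down (down A) = down (A::'s::order set)"
  unfolding down_def by (auto intro: order_trans)

lemma maximal_eqI:
  assumes "A \<subseteq> B" "B \<subseteq> down (A::'s::order set)"
  shows "maximal A = maximal B"
proof (intro set_eqI iffI)
  fix x assume "x \<in> maximal A"
  then have x: "x \<in> A" "\<forall>y\<in>A. x \<le> y \<longrightarrow> y = x" unfolding maximal_def by auto
  show "x \<in> maximal B"
    unfolding maximal_def
  proof (intro CollectI conjI ballI impI)
    show "x \<in> B" using x(1) assms(1) by blast
  next
    fix y assume "y \<in> B" "x \<le> y"
    then obtain a where "a \<in> A" "y \<le> a" using assms(2) unfolding down_def by blast
    then show "y = x" using x \<open>x \<le> y\<close> by (metis antisym order_trans)
  qed
next
  fix x assume "x \<in> maximal B"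
  then have x: "x \<in> B" "\<forall>y\<in>B. x \<le> y \<longrightarrow> y = x" unfolding maximal_def by auto
  then obtain a where "a \<in> A" "x \<le> a" using assms(2) unfolding down_def by blast
  then show "x \<in> maximal A" using x assms(1) unfolding maximal_def by auto
qed

text \<open>In a continuous dcpo, the lubs of directed subsets of a down-closed set are closed under
  directed lubs: approximate each element of \<open>X\<close> from way below.\<close>

lemma Lub_closed_directed:
  assumes dc: "dcpo TYPE('s::order)" and cp: "continuous_po TYPE('s)"
    and E: "down E \<subseteq> (E::'s set)" and X: "X \<subseteq> Lub E" "directed X"
  shows "lub X \<in> Lub E"
proof -
  have approx: "directed {y. way_below y x}" "is_lub {y. way_below y x} x" for x :: 's
    using cp unfolding continuous_po_def by blast+
  define W where "W = {y. \<exists>x\<in>X. way_below y x}"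
  have "W \<subseteq> E"
  proof
    fix y assume "y \<in> W"
    then obtain x where x: "x \<in> X" "way_below y x" unfolding W_def by blast
    then obtain D where D: "D \<subseteq> E" "directed D" "x = lub D" using X unfolding Lub_def by blast
    then obtain d where "d \<in> D" "y \<le> d" using x(2) unfolding way_below_def by blast
    then show "y \<in> E" using D E unfolding down_def by blast
  qed
  moreover have "directed W"
    unfolding directed_def
  proof safe
    obtain x where "x \<in> X" using directed_nonempty[OF X(2)] by blast
    moreover obtain y where "way_below y x" using directed_nonempty[OF approx(1)[of x]] by blast
    ultimately show "W = {} \<Longrightarrow> False" unfolding W_def by blast
  next
    fix y1 y2 assume "y1 \<in> W" "y2 \<in> W"
    then obtain x1 x2 where "x1 \<in> X" "way_below y1 x1" "x2 \<in> X" "way_below y2 x2"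
      unfolding W_def by blast
    moreover from this obtain x where "x \<in> X" "x1 \<le> x" "x2 \<le> x"
      using directedD[OF X(2)] by blast
    ultimately have "x \<in> X" "way_below y1 x" "way_below y2 x"
      unfolding way_below_def by (meson order_trans)+
    then show "\<exists>z\<in>W. y1 \<le> z \<and> y2 \<le> z"
      using directedD[OF approx(1)[of x]] unfolding W_def by blast
  qed
  moreover have "is_lub W (lub X)"
    unfolding is_lub_def
  proof safe
    fix d assume "d \<in> W"
    then obtain x where "x \<in> X" "way_below d x" unfolding W_def by blast
    then have "d \<le> x" using approx(2)[of x] unfolding is_lub_def by blast
    then show "d \<le> lub X" using lub_upper[OF dc X(2) \<open>x \<in> X\<close>] by (rule order_trans)
  next
    fix u assume "\<forall>d\<in>W. d \<le> u"
    then have "x \<le> u" if "x \<in> X" for x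
      using approx(2)[of x] that unfolding is_lub_def W_def by blast
    then show "lub X \<le> u" using lub_least[OF dc X(2)] by blast
  qed
  ultimately show ?thesis unfolding Lub_def by (metis (mono_tags, lifting) lub_eqI mem_Collect_eq)
qed

subsection \<open>Partial continuous maps\<close>

definition partial_mono :: "(('s::order) \<Rightarrow> 's option) \<Rightarrow> bool" where
  "partial_mono g \<longleftrightarrow> (\<forall>x y x'. g x = Some y \<longrightarrow> x \<le> x' \<longrightarrow> (\<exists>y'. g x' = Some y' \<and> y \<le> y'))"

definition preserves :: "('s \<Rightarrow> 's option) \<Rightarrow> 's set \<Rightarrow> bool" where
  "preserves g L \<longleftrightarrow> (\<forall>x y. x \<in> L \<longrightarrow> g x = Some y \<longrightarrow> y \<in> L)"

lemma partial_monoD: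
  "partial_mono g \<Longrightarrow> g x = Some y \<Longrightarrow> x \<le> x' \<Longrightarrow> \<exists>y'. g x' = Some y' \<and> y \<le> y'"
  unfolding partial_mono_def by blast

lemma preservesD: "preserves g L \<Longrightarrow> x \<in> L \<Longrightarrow> g x = Some y \<Longrightarrow> y \<in> L"
  unfolding preserves_def by blast

lemma scott_open_upD: "scott_open U \<Longrightarrow> x \<in> U \<Longrightarrow> x \<le> y \<Longrightarrow> y \<in> U"
  unfolding scott_open_def by blast

lemma scott_open_directedD:
  assumes "scott_open U" "directed D" "lub D \<in> U"
  shows "D \<inter> U \<noteq> {}"
proof -
  have "\<forall>D. directed D \<longrightarrow> lub D \<in> U \<longrightarrow> D \<inter> U \<noteq> {}"
    using assms(1) unfolding scott_open_def by (rule conjunct2)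
  then show ?thesis using assms(2,3) by blast
qed

lemma partial_continuous_mono:
  assumes "partial_continuous f"
  shows "partial_mono f"
  unfolding partial_mono_def
proof (intro allI impI)
  fix x y x' assume fx: "f x = Some y" and "x \<le> x'"
  moreover have "scott_open (dom f)" using assms unfolding partial_continuous_def by blast
  ultimately obtain y' where fx': "f x' = Some y'" using scott_open_upD[of "dom f" x x'] by blast
  have "directed {x, x'}" unfolding directed_def using \<open>x \<le> x'\<close> by auto
  moreover have "lub {x, x'} = x'" by (rule lub_eqI) (use \<open>x \<le> x'\<close> in \<open>auto simp: is_lub_def\<close>)
  ultimately have "is_lub {y, y'} y'"
    using assms fx fx' unfolding partial_continuous_def by (auto simp: domIff)
  then show "\<exists>y'. f x' = Some y' \<and> y \<le> y'" using fx' unfolding is_lub_def by blast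
qed

lemma scott_open_restrict:
  assumes dc: "dcpo TYPE('s::order)" and U: "scott_open (U::'s set)"
    and D: "directed D" "lub D \<in> U"
  shows "directed (D \<inter> U)" "lub (D \<inter> U) = lub D"
proof -
  note up = scott_open_upD[OF U]
  obtain d0 where d0: "d0 \<in> D" "d0 \<in> U" using scott_open_directedD[OF U D] by blast
  have cofinal: "\<exists>z\<in>D \<inter> U. d \<le> z" if d: "d \<in> D" for d
  proof -
    obtain z where "z \<in> D" "d \<le> z" "d0 \<le> z" using directedD[OF D(1) d d0(1)] by blast
    then show ?thesis using up[OF d0(2)] by blast
  qed
  show "directed (D \<inter> U)"
    unfolding directed_def
  proof (intro conjI ballI)
    show "D \<inter> U \<noteq> {}" using d0 by blast
  next
    fix a b assume a: "a \<in> D \<inter> U" and b: "b \<in> D \<inter> U"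
    obtain z where "z \<in> D" "a \<le> z" "b \<le> z" using directedD[OF D(1)] a b by blast
    moreover have "z \<in> U" using up \<open>a \<le> z\<close> a by blast
    ultimately show "\<exists>z\<in>D \<inter> U. a \<le> z \<and> b \<le> z" by blast
  qed
  have "is_lub (D \<inter> U) (lub D)"
    unfolding is_lub_def
  proof (intro conjI allI impI ballI)
    fix d assume "d \<in> D \<inter> U"
    then show "d \<le> lub D" using lub_upper[OF dc D(1)] by blast
  next
    fix u assume u: "\<forall>d\<in>D \<inter> U. d \<le> u"
    have "d \<le> u" if d: "d \<in> D" for d
    proof -
      obtain z where "z \<in> D \<inter> U" "d \<le> z" using cofinal[OF d] by blast
      then show ?thesis using u by (blast intro: order_trans)
    qed
    then show "lub D \<le> u" using lub_least[OF dc D(1)] by blast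
  qed
  then show "lub (D \<inter> U) = lub D" by (rule lub_eqI)
qed

lemma preserves_Lub:
  assumes dc: "dcpo TYPE('s::order)" and f: "partial_continuous f" and E: "preserves f (E::'s set)"
  shows "preserves f (Lub E)"
  unfolding preserves_def
proof (intro allI impI)
  fix x y assume "x \<in> Lub E" and y: "f x = Some y"
  then obtain D where D: "D \<subseteq> E" "directed D" "x = lub D" unfolding Lub_def by blast
  define D' where "D' = D \<inter> dom f"
  have "scott_open (dom f)" using f unfolding partial_continuous_def by blast
  then have D': "directed D'" "lub D' = x"
    using scott_open_restrict[OF dc _ D(2)] D(3) y unfolding D'_def by blast+
  have "is_lub (the ` f ` D') y"
    using f D' y unfolding partial_continuous_def D'_def by force
  then have "lub (the ` f ` D') = y" by (rule lub_eqI)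
  moreover have "the ` f ` D' \<subseteq> E"
    using E D(1) unfolding preserves_def D'_def by force
  moreover have "directed (the ` f ` D')"
    using directed_image_mono_on[OF D'(1), of "the \<circ> f"] partial_continuous_mono[OF f]
    unfolding D'_def partial_mono_def by (force intro: mono_onI simp: image_comp)
  ultimately show "y \<in> Lub E" unfolding Lub_def by blast
qed

subsection \<open>Compositions and acceleration\<close>

lemma Fstar_induct[consumes 1, case_names id comp]:
  assumes "g \<in> Fstar F" "P Some" "\<And>f g. f \<in> F \<Longrightarrow> P g \<Longrightarrow> P (f \<circ>\<^sub>m g)"
  shows "P g"
proof -
  obtain fs where fs: "set fs \<subseteq> F" and g: "g = foldr (\<lambda>f g. f \<circ>\<^sub>m g) fs Some"
    using assms(1) unfolding Fstar_def by blast
  from fs have "P (foldr (\<lambda>f g. f \<circ>\<^sub>m g) fs Some)"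
    by (induction fs) (simp_all add: assms(2,3))
  then show ?thesis unfolding g .
qed

lemma partial_mono_map_comp:
  assumes f: "partial_mono f" and g: "partial_mono g"
  shows "partial_mono (f \<circ>\<^sub>m g)"
  unfolding partial_mono_def
proof (intro allI impI)
  fix x z x' assume "(f \<circ>\<^sub>m g) x = Some z" "x \<le> x'"
  then obtain y where y: "g x = Some y" "f y = Some z" by (auto simp: map_comp_Some_iff)
  obtain y' where "g x' = Some y'" "y \<le> y'" using partial_monoD[OF g y(1) \<open>x \<le> x'\<close>] by blast
  moreover obtain z' where "f y' = Some z'" "z \<le> z'" using partial_monoD[OF f y(2) calculation(2)] by blast
  ultimately show "\<exists>z'. (f \<circ>\<^sub>m g) x' = Some z' \<and> z \<le> z'" by auto
qed

lemma preserves_map_comp: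
  assumes "preserves f L" "preserves g L"
  shows "preserves (f \<circ>\<^sub>m g) L"
  unfolding preserves_def
proof (intro allI impI)
  fix x z assume "x \<in> L" "(f \<circ>\<^sub>m g) x = Some z"
  then obtain y where "g x = Some y" "f y = Some z" by (auto simp: map_comp_Some_iff)
  then show "z \<in> L" using preservesD[OF assms(1)] preservesD[OF assms(2) \<open>x \<in> L\<close>] by blast
qed

lemma preserves_piter:
  assumes "preserves g L"
  shows "preserves (piter g n) L"
proof (induction n)
  case 0
  show ?case unfolding preserves_def by simp
next
  case (Suc n)
  show ?case
    unfolding preserves_def
    by (auto simp: bind_eq_Some_conv intro: preservesD[OF assms] preservesD[OF Suc])
qed

lemma piter_chain:
  assumes g: "partial_mono g" and "g a = Some b" "a \<le> b"
  obtains c where "\<And>n. piter g n a = Some (c n)" "mono c"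
proof -
  have step: "\<exists>x y. piter g n a = Some x \<and> g x = Some y \<and> x \<le> y" for n
  proof (induction n)
    case 0
    then show ?case using assms by auto
  next
    case (Suc n)
    then obtain x y where "piter g n a = Some x" "g x = Some y" "x \<le> y" by blast
    moreover obtain y' where "g y = Some y'" "y \<le> y'" using partial_monoD[OF g \<open>g x = Some y\<close> \<open>x \<le> y\<close>] by blast
    ultimately show ?case by auto
  qed
  define c where "c n = the (piter g n a)" for n
  have "piter g n a = Some (c n)" for n using step[of n] unfolding c_def by auto
  moreover have "mono c"
    unfolding mono_iff_le_Suc
  proof
    fix n
    obtain x y where "piter g n a = Some x" "g x = Some y" "x \<le> y" using step by blast
    then show "c n \<le> c (Suc n)" unfolding c_def by simp
  qed
  ultimately show thesis by (rule that)
qed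

lemma preserves_accel:
  assumes g: "partial_mono g" "preserves g L"
    and L: "\<And>X. X \<subseteq> L \<Longrightarrow> directed X \<Longrightarrow> lub X \<in> L"
  shows "preserves (accel g) (L::'s::order set)"
  unfolding preserves_def
proof (intro allI impI)
  fix a y assume a: "a \<in> L" and y: "accel g a = Some y"
  obtain b where b: "g a = Some b" using y by (cases "g a") (auto simp: accel_def)
  show "y \<in> L"
  proof (cases "a < b")
    case False
    then have "y = b" using y b by (simp add: accel_def)
    then show ?thesis using preservesD[OF g(2) a b] by simp
  next
    case True
    obtain c where c: "\<And>n. piter g n a = Some (c n)" "mono c"
      using piter_chain[OF g(1) b less_imp_le[OF True]] by blast
    have "{z. \<exists>n. piter g n a = Some z} = range c" using c(1) by auto
    then have "y = lub (range c)" using y b True by (simp add: accel_def)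
    moreover have "range c \<subseteq> L" using preservesD[OF preserves_piter[OF g(2)] a c(1)] by blast
    ultimately show ?thesis using L directed_range_mono[OF c(2)] by blast
  qed
qed

subsection \<open>Soundness and completeness of a terminating run\<close>

lemma Post_star_subset_down:
  assumes F: "\<forall>f\<in>F. partial_mono f" and "A0 \<subseteq> down B" and "le_flat (Post F B) B"
  shows "Post_star F A0 \<subseteq> down B"
proof
  fix x assume "x \<in> Post_star F A0"
  then show "x \<in> down B"
  proof (induction rule: Post_star.induct)
    case (base a)
    then show ?case using assms(2) by blast
  next
    case (step x f y)
    then obtain b where b: "b \<in> B" "x \<le> b" unfolding down_def by blast
    obtain y' where y': "f b = Some y'" "y \<le> y'"
      using partial_monoD[OF bspec[OF F \<open>f \<in> F\<close>] \<open>f x = Some y\<close> b(2)] by blast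
    have "y' \<in> Post F B" using b(1) y'(1) \<open>f \<in> F\<close> unfolding Post_def by blast
    then have "y' \<in> down B"
      using assms(3) unfolding le_flat_def down_def by (blast intro: order_refl)
    then show ?case unfolding down_def by (blast intro: order_trans[OF y'(2)])
  qed
qed

lemma Cover_subset_down:
  assumes "\<forall>f\<in>F. partial_mono f" "s0 \<in> B" "le_flat (Post F B) B"
  shows "Cover F s0 \<subseteq> down B"
proof -
  have "down {s0} \<subseteq> down B" using assms(2) by (simp add: down_mono)
  then have "Post_star F (down {s0}) \<subseteq> down B"
    using Post_star_subset_down[OF assms(1) _ assms(3)] by blast
  then show ?thesis unfolding Cover_def using down_mono down_down by metis
qed

lemma preserves_Cover:
  assumes F: "\<forall>f\<in>F. partial_mono f" and "f \<in> F"
  shows "preserves f (Cover F s0)"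
  unfolding preserves_def
proof (intro allI impI)
  fix x y assume "x \<in> Cover F s0" "f x = Some y"
  then obtain p where p: "p \<in> Post_star F (down {s0})" "x \<le> p"
    unfolding Cover_def down_def by blast
  obtain y' where y': "f p = Some y'" "y \<le> y'"
    using partial_monoD[OF bspec[OF F \<open>f \<in> F\<close>] \<open>f x = Some y\<close> p(2)] by blast
  have "y' \<in> Post_star F (down {s0})" using Post_star.step[OF p(1) \<open>f \<in> F\<close> y'(1)] .
  then show "y \<in> Cover F s0" using y'(2) unfolding Cover_def down_def by blast
qed

lemma terminating_runD:
  assumes "terminating_run F s0 A n"
  shows "A 0 = {s0}"
    and "\<And>i. i < n \<Longrightarrow> \<exists>g\<in>Fstar F. \<exists>a\<in>A i. a \<in> dom g \<and> A (Suc i) = A i \<union> {the (accel g a)}"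
    and "le_flat (Post F (A n)) (A n)"
  using assms unfolding terminating_run_def by blast+

lemma terminating_run_invariant:
  assumes run: "terminating_run F s0 A n" and "s0 \<in> L"
    and accel: "\<And>g. g \<in> Fstar F \<Longrightarrow> preserves (accel g) L"
  shows "i \<le> n \<Longrightarrow> finite (A i) \<and> s0 \<in> A i \<and> A i \<subseteq> L"
proof (induction i)
  case 0
  then show ?case using terminating_runD(1)[OF run] \<open>s0 \<in> L\<close> by simp
next
  case (Suc i)
  then have IH: "finite (A i)" "s0 \<in> A i" "A i \<subseteq> L" and "i < n" by auto
  then obtain g a where g: "g \<in> Fstar F" and a: "a \<in> A i" "a \<in> dom g"
    and A: "A (Suc i) = A i \<union> {the (accel g a)}"
    using terminating_runD(2)[OF run] by blast
  from a(2) obtain b where "g a = Some b" by blast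
  then have "accel g a = Some (the (accel g a))" by (simp add: accel_def)
  then have "the (accel g a) \<in> L" using preservesD[OF accel[OF g]] a(1) IH(3) by blast
  then show ?case using IH A by simp
qed

lemma complete_wsts_preserves_accel:
  fixes F :: "(('s::order) \<Rightarrow> 's option) set"
  assumes cw: "complete_wsts F" and g: "g \<in> Fstar F"
  shows "preserves (accel g) (Lub (Cover F s0))"
proof -
  have dc: "dcpo TYPE('s)" and cp: "continuous_po TYPE('s)"
    and pc: "\<forall>f\<in>F. partial_continuous f"
    using cw unfolding complete_wsts_def by blast+
  then have mono: "\<forall>f\<in>F. partial_mono f" using partial_continuous_mono by blast
  have Lub_F: "preserves f (Lub (Cover F s0))" if "f \<in> F" for f
    using preserves_Lub[OF dc bspec[OF pc that] preserves_Cover[OF mono that]] .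
  have "partial_mono g \<and> preserves g (Lub (Cover F s0))"
    using g
  proof (induction rule: Fstar_induct)
    case id
    show ?case unfolding partial_mono_def preserves_def by auto
  next
    case (comp f g)
    then show ?case
      using partial_mono_map_comp[OF bspec[OF mono comp(1)]] preserves_map_comp[OF Lub_F[OF comp(1)]]
      by blast
  qed
  moreover have "down (Cover F s0) \<subseteq> Cover F s0" unfolding Cover_def down_down by simp
  ultimately show ?thesis
    using preserves_accel Lub_closed_directed[OF dc cp] by blast
qed

theorem theorem5p5:
  fixes F :: "(('s::order) \<Rightarrow> 's option) set" and s0 :: 's
    and A :: "nat \<Rightarrow> 's set" and n :: nat
  assumes "complete_wsts F"
    and "terminating_run F s0 A n"
  shows "maximal (A n) = Clover F s0"
proof -
  let ?L = "Lub (Cover F s0)"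
  have dc: "dcpo TYPE('s)" and mono: "\<forall>f\<in>F. partial_mono f"
    using assms(1) partial_continuous_mono unfolding complete_wsts_def by blast+
  have "s0 \<in> Cover F s0" unfolding Cover_def down_def by (blast intro: Post_star.base)
  then have "s0 \<in> ?L" using subset_Lub by blast
  then have A: "finite (A n)" "s0 \<in> A n" "A n \<subseteq> ?L"
    using terminating_run_invariant[OF assms(2) _ complete_wsts_preserves_accel[OF assms(1)]] by auto
  have "Cover F s0 \<subseteq> down (A n)"
    using Cover_subset_down[OF mono A(2) terminating_runD(3)[OF assms(2)]] .
  then have "?L \<subseteq> down (A n)" using Lub_subset_down_finite[OF dc A(1)] by blast
  then show ?thesis unfolding Clover_def using maximal_eqI[OF A(3)] by blast
qed

end
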